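(* Let $(A,[\cdot,\cdot])$ be a Malcev algebra and let $r\in A\otimes A$ be skew-symmetric. Assume there exists a nondegenerate symmetric invariant bilinear form $B$ on $A$, and define $\varphi:A\to A^*$ by $\langle\varphi(x),y\rangle=B(x,y)$. Then $r$ is a solution of the Malcev Yang-Baxter equation in $A$ if and only if $\mathcal{R}=r\circ\varphi:A\to A$ is a Rota-Baxter operator of weight $0$ on $A$.
   Context: Field $\mathbb{K}$ of characteristic zero, finite-dimensional spaces. A Malcev algebra is a vector space with an anti-symmetric bracket satisfying $J(x,y,[x,z])=[J(x,y,z),x]$, $J(x,y,z)=[[x,y],z]+[[z,x],y]+[[y,z],x]$. $r\in A\otimes A$ is viewed as a map $r:A^*\to A$ by $\langle a^*,r(b^* )\rangle=\langle a^*\otimes b^*,r\rangle$; skew-symmetric means $r=-\sigma(r)$ with $\sigma(a\otimes b)=b\otimes a$. For $r=\sum_i x_i\otimes y_i$, $r$ solves the Malcev Yang-Baxter equation if $\sum_{i,j}[x_i,x_j]\otimes y_i\otimes y_j+\sum_{i,j}x_i\otimes[y_i,x_j]\otimes y_j+\sum_{i,j}x_i\otimes x_j\otimes[y_i,y_j]=0$. A symmetric bilinear form $B$ is invariant if $B([x,y],z)=B(x,[y,z])$. A Rota-Baxter operator of weight $0$ is a linear map $\mathcal{R}:A\to A$ with $[\mathcal{R}(x),\mathcal{R}(y)]=\mathcal{R}([\mathcal{R}(x),y]+[x,\mathcal{R}(y)])$ for all $x,y$. *)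

theory Defs
  imports Complex_Main
begin

text \<open>An element r of A (x) A is given as
  a finite sum r = sum_i x_i (x) y_i, i.e. as a list of pairs (x_i, y_i); equalities of
  tensors are tested against the dual space (canonical pairing of A^{(x)k} with (A*)^{(x)k}).\<close>

definition fin_dim_vs :: "('k::field \<Rightarrow> 'v::ab_group_add \<Rightarrow> 'v) \<Rightarrow> bool" where
  "fin_dim_vs scale \<longleftrightarrow> vector_space scale \<and>
     (\<exists>S. finite S \<and> module.span scale S = UNIV)"

definition dual_vec :: "('k::field \<Rightarrow> 'v::ab_group_add \<Rightarrow> 'v) \<Rightarrow> ('v \<Rightarrow> 'k) \<Rightarrow> bool" where
  "dual_vec scale f \<longleftrightarrow> Vector_Spaces.linear scale (*) f"

definition bilinear_map :: "('k::field \<Rightarrow> 'v::ab_group_add \<Rightarrow> 'v) \<Rightarrow>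
    ('k \<Rightarrow> 'w::ab_group_add \<Rightarrow> 'w) \<Rightarrow> ('v \<Rightarrow> 'v \<Rightarrow> 'w) \<Rightarrow> bool" where
  "bilinear_map scale scale' b \<longleftrightarrow>
     (\<forall>x. Vector_Spaces.linear scale scale' (b x)) \<and>
     (\<forall>y. Vector_Spaces.linear scale scale' (\<lambda>x. b x y))"

definition jacobiator :: "('v::ab_group_add \<Rightarrow> 'v \<Rightarrow> 'v) \<Rightarrow> 'v \<Rightarrow> 'v \<Rightarrow> 'v \<Rightarrow> 'v" where
  "jacobiator br x y z = br (br x y) z + br (br z x) y + br (br y z) x"

definition malcev_algebra :: "('k::field \<Rightarrow> 'v::ab_group_add \<Rightarrow> 'v) \<Rightarrow> ('v \<Rightarrow> 'v \<Rightarrow> 'v) \<Rightarrow> bool" where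
  "malcev_algebra scale br \<longleftrightarrow>
     bilinear_map scale scale br \<and>
     (\<forall>x y. br x y = - br y x) \<and>
     (\<forall>x y z. jacobiator br x y (br x z) = br (jacobiator br x y z) x)"

text \<open>r = sum_i x_i (x) y_i viewed as a map A* -> A: <a*, r(b*)> = <a* (x) b*, r>,
  hence r(b*) = sum_i b*(y_i) x_i.\<close>
definition tensor_map :: "('k::field \<Rightarrow> 'v::ab_group_add \<Rightarrow> 'v) \<Rightarrow> ('v \<times> 'v) list \<Rightarrow> ('v \<Rightarrow> 'k) \<Rightarrow> 'v" where
  "tensor_map scale r g = (\<Sum>p\<leftarrow>r. scale (g (snd p)) (fst p))"

definition skew_tensor :: "('k::field \<Rightarrow> 'v::ab_group_add \<Rightarrow> 'v) \<Rightarrow> ('v \<times> 'v) list \<Rightarrow> bool" where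
  "skew_tensor scale r \<longleftrightarrow>
     (\<forall>f g. dual_vec scale f \<longrightarrow> dual_vec scale g \<longrightarrow>
        (\<Sum>p\<leftarrow>r. f (fst p) * g (snd p)) = - (\<Sum>p\<leftarrow>r. f (snd p) * g (fst p)))"

definition malcev_YBE :: "('k::field \<Rightarrow> 'v::ab_group_add \<Rightarrow> 'v) \<Rightarrow> ('v \<Rightarrow> 'v \<Rightarrow> 'v) \<Rightarrow> ('v \<times> 'v) list \<Rightarrow> bool" where
  "malcev_YBE scale br r \<longleftrightarrow>
     (\<forall>f g h. dual_vec scale f \<longrightarrow> dual_vec scale g \<longrightarrow> dual_vec scale h \<longrightarrow>
        (\<Sum>p\<leftarrow>r. \<Sum>q\<leftarrow>r.
            f (br (fst p) (fst q)) * g (snd p) * h (snd q)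
          + f (fst p) * g (br (snd p) (fst q)) * h (snd q)
          + f (fst p) * g (fst q) * h (br (snd p) (snd q))) = 0)"

definition invariant_form :: "('v \<Rightarrow> 'v \<Rightarrow> 'v) \<Rightarrow> ('v \<Rightarrow> 'v \<Rightarrow> 'k) \<Rightarrow> bool" where
  "invariant_form br B \<longleftrightarrow> (\<forall>x y z. B (br x y) z = B x (br y z))"

definition nondegenerate_form :: "('v::zero \<Rightarrow> 'v \<Rightarrow> 'k::zero) \<Rightarrow> bool" where
  "nondegenerate_form B \<longleftrightarrow> (\<forall>x. (\<forall>y. B x y = 0) \<longrightarrow> x = 0)"

definition symmetric_form :: "('v \<Rightarrow> 'v \<Rightarrow> 'k) \<Rightarrow> bool" where
  "symmetric_form B \<longleftrightarrow> (\<forall>x y. B x y = B y x)"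

definition rota_baxter_0 :: "('v::ab_group_add \<Rightarrow> 'v \<Rightarrow> 'v) \<Rightarrow> ('v \<Rightarrow> 'v) \<Rightarrow> bool" where
  "rota_baxter_0 br R \<longleftrightarrow>
     (\<forall>x y. br (R x) (R y) = R (br (R x) y + br x (R y)))"

end

theory Submission imports Defs begin

text \<open>Pairing the Malcev Yang-Baxter tensor of a skew-symmetric r with f \<otimes> g \<otimes> h
  gives f [r g, r h] - g [r f, r h] + h [r f, r g], where r is read as a map A* \<rightarrow> A.
  Pulling functionals back along \<phi>, i.e. taking f = B x, g = B y, h = B c, this
  expression becomes B([R x, R y] - R([R x, y] + [x, R y]), c) by invariance and symmetry
  of B. Nondegeneracy makes \<phi> injective, and since A is finite-dimensional also
  surjective, so the two vanishing conditions are equivalent.\<close>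

lemmas linear_addD = module_hom.add[OF linear_iff_module_hom[THEN iffD1]]
lemmas linear_scaleD = module_hom.scale[OF linear_iff_module_hom[THEN iffD1]]
lemmas linear_negD = module_hom.neg[OF linear_iff_module_hom[THEN iffD1]]
lemmas linear_diffD = module_hom.diff[OF linear_iff_module_hom[THEN iffD1]]
lemmas linear_zeroD = module_hom.zero[OF linear_iff_module_hom[THEN iffD1]]
lemmas linear_sumD = module_hom.sum[OF linear_iff_module_hom[THEN iffD1]]

lemma dual_vec_tensor_map:
  assumes "dual_vec s L"
  shows "L (tensor_map s r g) = (\<Sum>p\<leftarrow>r. g (snd p) * L (fst p))"
  using assms unfolding tensor_map_def dual_vec_def
  by (induction r) (auto simp: linear_addD linear_scaleD linear_zeroD)

lemma dual_vec_comp_bracket_left: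
  assumes "bilinear_map s s br" "dual_vec s f"
  shows "dual_vec s (\<lambda>u. f (br u z))"
  using Vector_Spaces.linear_compose[of s s "\<lambda>u. br u z" "(*)" f] assms
  unfolding bilinear_map_def dual_vec_def o_def by blast

lemma dual_vec_comp_bracket_right:
  assumes "bilinear_map s s br" "dual_vec s f"
  shows "dual_vec s (\<lambda>u. f (br z u))"
  using Vector_Spaces.linear_compose[of s s "br z" "(*)" f] assms
  unfolding bilinear_map_def dual_vec_def o_def by blast

lemma skew_tensor_map_swap:
  assumes "skew_tensor s r" "dual_vec s f" "dual_vec s g"
  shows "g (tensor_map s r f) = - f (tensor_map s r g)"
proof -
  have "g (tensor_map s r f) = (\<Sum>p\<leftarrow>r. g (fst p) * f (snd p))"
    using dual_vec_tensor_map[OF assms(3)] by (simp add: mult.commute)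
  also have "\<dots> = - (\<Sum>p\<leftarrow>r. g (snd p) * f (fst p))"
    using assms unfolding skew_tensor_def by blast
  also have "\<dots> = - f (tensor_map s r g)"
    using dual_vec_tensor_map[OF assms(2)] by simp
  finally show ?thesis .
qed

lemma sum_list_bracket_fst_fst:
  assumes "bilinear_map s s br" "dual_vec s f"
  shows "(\<Sum>p\<leftarrow>r. \<Sum>q\<leftarrow>r. f (br (fst p) (fst q)) * g (snd p) * h (snd q))
    = f (br (tensor_map s r g) (tensor_map s r h))"
proof -
  have "f (br (tensor_map s r g) (tensor_map s r h))
      = (\<Sum>p\<leftarrow>r. g (snd p) * f (br (fst p) (tensor_map s r h)))"
    using dual_vec_tensor_map[OF dual_vec_comp_bracket_left[OF assms]] .
  also have "\<dots> = (\<Sum>p\<leftarrow>r. g (snd p) * (\<Sum>q\<leftarrow>r. h (snd q) * f (br (fst p) (fst q))))"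
    using dual_vec_tensor_map[OF dual_vec_comp_bracket_right[OF assms]] by simp
  finally show ?thesis
    by (simp add: sum_list_const_mult[symmetric] mult_ac)
qed

lemma sum_list_bracket_snd_fst:
  assumes "bilinear_map s s br" "skew_tensor s r" "dual_vec s f" "dual_vec s g"
  shows "(\<Sum>p\<leftarrow>r. \<Sum>q\<leftarrow>r. f (fst p) * g (br (snd p) (fst q)) * h (snd q))
    = - g (br (tensor_map s r f) (tensor_map s r h))"
proof -
  let ?G = "\<lambda>u. g (br u (tensor_map s r h))"
  have "(\<Sum>p\<leftarrow>r. \<Sum>q\<leftarrow>r. f (fst p) * g (br (snd p) (fst q)) * h (snd q))
      = (\<Sum>p\<leftarrow>r. f (fst p) * (\<Sum>q\<leftarrow>r. h (snd q) * g (br (snd p) (fst q))))"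
    by (simp add: sum_list_const_mult[symmetric] mult_ac)
  also have "\<dots> = (\<Sum>p\<leftarrow>r. f (fst p) * ?G (snd p))"
    using dual_vec_tensor_map[OF dual_vec_comp_bracket_right[OF assms(1,4)]] by simp
  also have "\<dots> = f (tensor_map s r ?G)"
    using dual_vec_tensor_map[OF assms(3)] by (simp add: mult_ac)
  also have "\<dots> = - ?G (tensor_map s r f)"
    using skew_tensor_map_swap[OF assms(2) dual_vec_comp_bracket_left[OF assms(1,4)] assms(3)] .
  finally show ?thesis .
qed

lemma sum_list_bracket_snd_snd:
  assumes "bilinear_map s s br" "skew_tensor s r" "dual_vec s f" "dual_vec s g" "dual_vec s h"
  shows "(\<Sum>p\<leftarrow>r. \<Sum>q\<leftarrow>r. f (fst p) * g (fst q) * h (br (snd p) (snd q)))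
    = h (br (tensor_map s r f) (tensor_map s r g))"
proof -
  let ?H = "\<lambda>u. h (br u (tensor_map s r g))"
  have inner: "(\<Sum>q\<leftarrow>r. g (fst q) * h (br y (snd q))) = - ?H y" for y
  proof -
    have "(\<Sum>q\<leftarrow>r. g (fst q) * h (br y (snd q))) = g (tensor_map s r (\<lambda>u. h (br y u)))"
      using dual_vec_tensor_map[OF assms(4)] by (simp add: mult_ac)
    also have "\<dots> = - ?H y"
      using skew_tensor_map_swap[OF assms(2) dual_vec_comp_bracket_right[OF assms(1,5)] assms(4)] .
    finally show ?thesis .
  qed
  have "(\<Sum>p\<leftarrow>r. \<Sum>q\<leftarrow>r. f (fst p) * g (fst q) * h (br (snd p) (snd q)))
      = (\<Sum>p\<leftarrow>r. f (fst p) * (\<Sum>q\<leftarrow>r. g (fst q) * h (br (snd p) (snd q))))"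
    by (simp add: sum_list_const_mult[symmetric] mult_ac)
  also have "\<dots> = - (\<Sum>p\<leftarrow>r. f (fst p) * ?H (snd p))"
    by (simp add: inner sum_list_const_mult[symmetric] uminus_sum_list_map o_def)
  also have "\<dots> = - f (tensor_map s r ?H)"
    using dual_vec_tensor_map[OF assms(3)] by (simp add: mult_ac)
  also have "\<dots> = ?H (tensor_map s r f)"
    using skew_tensor_map_swap[OF assms(2) dual_vec_comp_bracket_left[OF assms(1,5)] assms(3)]
    by simp
  finally show ?thesis .
qed

definition ybe_dual_form ::
    "('k::field \<Rightarrow> 'v::ab_group_add \<Rightarrow> 'v) \<Rightarrow> ('v \<Rightarrow> 'v \<Rightarrow> 'v) \<Rightarrow> ('v \<times> 'v) list \<Rightarrow>
     ('v \<Rightarrow> 'k) \<Rightarrow> ('v \<Rightarrow> 'k) \<Rightarrow> ('v \<Rightarrow> 'k) \<Rightarrow> 'k" where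
  "ybe_dual_form s br r f g h =
     f (br (tensor_map s r g) (tensor_map s r h)) - g (br (tensor_map s r f) (tensor_map s r h))
     + h (br (tensor_map s r f) (tensor_map s r g))"

lemma malcev_YBE_iff_ybe_dual_form:
  assumes "bilinear_map s s br" "skew_tensor s r"
  shows "malcev_YBE s br r \<longleftrightarrow>
    (\<forall>f g h. dual_vec s f \<longrightarrow> dual_vec s g \<longrightarrow> dual_vec s h \<longrightarrow> ybe_dual_form s br r f g h = 0)"
  unfolding malcev_YBE_def ybe_dual_form_def
  using sum_list_bracket_fst_fst[OF assms(1)] sum_list_bracket_snd_fst[OF assms]
    sum_list_bracket_snd_snd[OF assms]
  by (simp add: sum_list_addf)

lemma rota_baxter_defect_ybe_dual_form:
  assumes anti: "\<And>u v. br u v = - br v u" and r: "skew_tensor s r"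
    and B: "bilinear_map s (*) B" "symmetric_form B" "invariant_form br B"
  defines "R \<equiv> \<lambda>x. tensor_map s r (\<lambda>y. B x y)"
  shows "B (br (R x) (R y) - R (br (R x) y + br x (R y))) c
    = ybe_dual_form s br r (B x) (B y) (B c)"
proof -
  have B_left: "Vector_Spaces.linear s (*) (\<lambda>u. B u z)" for z
    using B(1) unfolding bilinear_map_def by blast
  have B_right: "dual_vec s (B z)" for z
    using B(1) unfolding bilinear_map_def dual_vec_def by blast
  have sym: "B u v = B v u" for u v
    using B(2) unfolding symmetric_form_def by blast
  have inv: "B (br u v) w = B u (br v w)" for u v w
    using B(3) unfolding invariant_form_def by blast
  have R_adjoint: "B (R w) z = - B w (R z)" for w z
    using sym[of "R w" z] skew_tensor_map_swap[OF r B_right[of w] B_right[of z]]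
    unfolding R_def by simp
  have "B (br (R x) y) (R c) = - B y (br (R x) (R c))"
    using anti[of "R x" y] linear_negD[OF B_left] inv by metis
  moreover have "B (br x (R y)) (R c) = B x (br (R y) (R c))"
    by (rule inv)
  ultimately show ?thesis
    using linear_diffD[OF B_left] linear_addD[OF B_left] R_adjoint sym[of "br (R x) (R y)" c]
    unfolding ybe_dual_form_def R_def by simp
qed

lemma dual_vec_eq_on_spanning_set:
  assumes "vector_space s" "module.span s S = UNIV" "dual_vec s f" "dual_vec s g"
    and "\<And>e. e \<in> S \<Longrightarrow> f e = g e"
  shows "f = g"
proof
  fix v
  interpret vector_space s by fact
  have "v \<in> span S"
    using assms(2) by simp
  then obtain t u where t: "finite t" "t \<subseteq> S" "v = (\<Sum>e\<in>t. s (u e) e)"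
    unfolding span_explicit by blast
  have "f v = (\<Sum>e\<in>t. u e * f e)"
    using assms(3) t(3) unfolding dual_vec_def by (simp add: linear_sumD linear_scaleD)
  also have "\<dots> = (\<Sum>e\<in>t. u e * g e)"
    using assms(5) t(2) by (intro sum.cong) auto
  also have "\<dots> = g v"
    using assms(4) t(3) unfolding dual_vec_def by (simp add: linear_sumD linear_scaleD)
  finally show "f v = g v" .
qed

lemma fin_dim_vs_obtain_basis:
  assumes "fin_dim_vs s"
  obtains \<beta> where "finite_dimensional_vector_space s \<beta>"
proof -
  from assms obtain S where vs: "vector_space s" and S: "finite S" "module.span s S = UNIV"
    unfolding fin_dim_vs_def by blast
  interpret vector_space s by fact
  obtain \<beta> where \<beta>: "independent \<beta>" "UNIV \<subseteq> span \<beta>"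
    using basis_exists[of UNIV] by blast
  have "finite \<beta>"
    using independent_span_bound[OF S(1) \<beta>(1)] S(2) by simp
  with \<beta> have "finite_dimensional_vector_space s \<beta>"
    by unfold_locales auto
  then show thesis by (rule that)
qed

text \<open>The representing vector is a preimage under the endomorphism
  a \<mapsto> \<Sum>e\<in>\<beta>. B(a, e) e for a basis \<beta>, which is injective by nondegeneracy
  and hence surjective.\<close>

lemma nondegenerate_form_represents_dual:
  assumes "fin_dim_vs s" "bilinear_map s (*) B" "nondegenerate_form B" "dual_vec s f"
  shows "\<exists>a. B a = f"
proof -
  obtain \<beta> where "finite_dimensional_vector_space s \<beta>"
    using fin_dim_vs_obtain_basis[OF assms(1)] .
  then interpret finite_dimensional_vector_space s \<beta> .
  have B_left: "Vector_Spaces.linear s (*) (\<lambda>u. B u e)" for e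
    using assms(2) unfolding bilinear_map_def by blast
  have B_right: "dual_vec s (B a)" for a
    using assms(2) unfolding bilinear_map_def dual_vec_def by blast
  define \<psi> where "\<psi> a = (\<Sum>e\<in>\<beta>. s (B a e) e)" for a
  have \<psi>_linear: "Vector_Spaces.linear s s \<psi>"
    unfolding Vector_Spaces.linear_iff \<psi>_def
    by (simp add: vector_space_axioms linear_addD[OF B_left] linear_scaleD[OF B_left]
        scale_left_distrib sum.distrib scale_sum_right)
  have \<psi>_coords: "B a = g" if "dual_vec s g" "\<psi> a = (\<Sum>e\<in>\<beta>. s (g e) e)" for a g
  proof (rule dual_vec_eq_on_spanning_set[OF vector_space_axioms span_Basis B_right that(1)])
    have "(\<Sum>e\<in>\<beta>. s (B a e - g e) e) = 0"
      using that(2) unfolding \<psi>_def by (simp add: scale_left_diff_distrib sum_subtractf)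
    then show "B a e = g e" if "e \<in> \<beta>" for e
      using independentD[OF independent_Basis finite_Basis order_refl] that by fastforce
  qed
  have "inj \<psi>"
  proof (rule injI)
    fix a b assume "\<psi> a = \<psi> b"
    then have "B a = B b"
      using \<psi>_coords[OF B_right] unfolding \<psi>_def by blast
    then have "B (a - b) y = 0" for y
      using linear_diffD[OF B_left] by simp
    then show "a = b"
      using assms(3) unfolding nondegenerate_form_def by (metis eq_iff_diff_eq_0)
  qed
  then have "surj \<psi>"
    by (rule linear_inj_imp_surj[OF \<psi>_linear])
  then obtain a where "(\<Sum>e\<in>\<beta>. s (f e) e) = \<psi> a"
    by (rule surjE)
  then show ?thesis
    using \<psi>_coords[OF assms(4)] by metis
qed

theorem corollary2p7:
  fixes scale :: "'k::field_char_0 \<Rightarrow> 'v::ab_group_add \<Rightarrow> 'v"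
    and br :: "'v \<Rightarrow> 'v \<Rightarrow> 'v"
    and r :: "('v \<times> 'v) list"
    and B :: "'v \<Rightarrow> 'v \<Rightarrow> 'k"
  assumes "fin_dim_vs scale"
    and "malcev_algebra scale br"
    and "skew_tensor scale r"
    and "bilinear_map scale (*) B"
    and "symmetric_form B"
    and "invariant_form br B"
    and "nondegenerate_form B"
  shows "malcev_YBE scale br r \<longleftrightarrow> rota_baxter_0 br (\<lambda>x. tensor_map scale r (\<lambda>y. B x y))"
proof -
  define R where "R \<equiv> \<lambda>x. tensor_map scale r (\<lambda>y. B x y)"
  define T where "T \<equiv> ybe_dual_form scale br r"
  have bracket_bilinear: "bilinear_map scale scale br" and anti: "\<And>u v. br u v = - br v u"
    using assms(2) unfolding malcev_algebra_def by blast+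
  have B_dual: "dual_vec scale (B x)" for x
    using assms(4) unfolding bilinear_map_def dual_vec_def by blast
  have B_zero: "B 0 c = 0" for c
    using assms(4) linear_zeroD unfolding bilinear_map_def by blast
  have "malcev_YBE scale br r \<longleftrightarrow>
      (\<forall>f g h. dual_vec scale f \<longrightarrow> dual_vec scale g \<longrightarrow> dual_vec scale h \<longrightarrow> T f g h = 0)"
    unfolding T_def by (rule malcev_YBE_iff_ybe_dual_form[OF bracket_bilinear assms(3)])
  also have "\<dots> \<longleftrightarrow> (\<forall>x y c. T (B x) (B y) (B c) = 0)"
    using nondegenerate_form_represents_dual[OF assms(1,4,7)] B_dual by metis
  also have "\<dots> \<longleftrightarrow> (\<forall>x y c. B (br (R x) (R y) - R (br (R x) y + br x (R y))) c = 0)"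
    using rota_baxter_defect_ybe_dual_form[OF anti assms(3-6)] unfolding T_def R_def by simp
  also have "\<dots> \<longleftrightarrow> rota_baxter_0 br R"
    using assms(7) B_zero unfolding nondegenerate_form_def rota_baxter_0_def
    by (metis diff_self eq_iff_diff_eq_0)
  finally show ?thesis
    unfolding R_def .
qed

end
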